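(* Let $n\ge 8$, let $f:\{0,1\}^n\to\{0,1\}$ be fully sensitive at $0$, and let $p$ be its symmetrization polynomial. Then \[ \sup_{x\in[0,n]} |p^{(4)}(x)| \geq \frac{1}{6}. \] Moreover, the only polynomial for which this inequality is tight is \[ \tilde{p}(x) = -\frac{x^{4}}{144}+\frac{5 x^{3}}{36}-\frac{125 x^{2}}{144}+\frac{125 x}{72}. \]
   Context: $f$ is fully sensitive at $0$ if $f(0^n)=0$ and $f(e_i)=1$ for every $i=1,\dots,n$ ($e_i$ the $i$-th unit vector). Let $q$ be the unique multilinear real polynomial agreeing with $f$ on $\{0,1\}^n$, of degree $d(f)$. The symmetrization polynomial of $f$ is the univariate real polynomial $p$ of degree at most $d(f)$ with $p(x_1+\dots+x_n)=\frac{1}{n!}\sum_{\pi\in S_n} q(\pi(x))$ for all $x\in\{0,1\}^n$ ($\pi(x)$ permutes coordinates); equivalently $p(k)$, $k=0,\dots,n$, is the fraction of inputs of Hamming weight $k$ on which $f=1$. $p^{(4)}$ is the fourth derivative. *)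

theory Defs
  imports "HOL-Analysis.Analysis" "HOL-Computational_Algebra.Polynomial"
begin

(* Boolean cube {0,1}^n: an input x is identified with its support S = {i. x_i = 1},
   a subset of {0..<n}; Hamming weight = card S; unit vector e_i = {i}, 0^n = {}. *)

definition fully_sensitive_at_0 :: "nat \<Rightarrow> (nat set \<Rightarrow> bool) \<Rightarrow> bool" where
  "fully_sensitive_at_0 n f \<longleftrightarrow> \<not> f {} \<and> (\<forall>i<n. f {i})"

definition weight_fraction :: "nat \<Rightarrow> (nat set \<Rightarrow> bool) \<Rightarrow> nat \<Rightarrow> real" where
  "weight_fraction n f k =
     real (card {S. S \<subseteq> {0..<n} \<and> card S = k \<and> f S}) / real (n choose k)"

definition sym_poly :: "nat \<Rightarrow> (nat set \<Rightarrow> bool) \<Rightarrow> real poly" where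
  "sym_poly n f = (THE p. degree p \<le> n \<and>
      (\<forall>k\<le>n. poly p (real k) = weight_fraction n f k))"

definition p_tilde :: "real poly" where
  "p_tilde = [:0, 125/72, -125/144, 5/36, -1/144:]"

end

(* The fourth divided difference of p on nodes x_0 < ... < x_4 equals p''''(xi)/24 for some
   xi in [x_0, x_4].  On the nodes 0, 1, 2, 5, 8, full sensitivity gives p(0) = 0 and p(1) = 1,
   and p takes values in [0, 1] at integers, so this divided difference is at most -1/144, the
   value for p_tilde, with equality only if p(2) = 1, p(5) = 0 and p(8) = 1.  Hence p'''' >= -1/6
   on [0, 8] forces these values, and then r = p - p_tilde has r'''' >= 0 on [0, 8] and vanishes
   at all five nodes.  Replacing the node 8, resp. 5, by a point t in (5, 8) gives the divided
   differences r(t) / (t(t-1)(t-2)(t-5)) >= 0 and r(t) / (t(t-1)(t-2)(t-8)) >= 0, so r vanishes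
   on (5, 8) and p = p_tilde.  Since p_tilde'''' = -1/6, the supremum of |p''''| is at least 1/6,
   with equality only for p_tilde. *)

theory Submission
  imports Defs
begin

lemma strict_mono_on_atMostI:
  fixes x :: "nat \<Rightarrow> 'a::order"
  assumes "\<And>i. i < k \<Longrightarrow> x i < x (Suc i)"
  shows "strict_mono_on {..k} x"
proof (rule strict_mono_onI)
  fix i j assume "i \<in> {..k}" "j \<in> {..k}" "i < j"
  then show "x i < x j"
  proof (induction j)
    case (Suc j)
    then show ?case
      using assms[of j] by (cases "i = j") (auto intro: order.strict_trans)
  qed simp
qed

lemma higher_pderiv_diff:
  "(pderiv ^^ k) (p - q) = (pderiv ^^ k) p - (pderiv ^^ k) (q :: 'a::idom poly)"
  by (induction k) (simp_all add: pderiv_diff)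

lemma higher_pderiv_degree_le:
  fixes p :: "'a::{comm_semiring_1,semiring_no_zero_divisors,semiring_char_0} poly"
  assumes "degree p \<le> k"
  shows "(pderiv ^^ k) p = [:fact k * coeff p k:]"
proof (rule poly_eqI)
  fix n
  show "coeff ((pderiv ^^ k) p) n = coeff [:fact k * coeff p k:] n"
  proof (cases n)
    case 0
    then show ?thesis by (simp add: coeff_higher_pderiv pochhammer_fact)
  next
    case (Suc m)
    then show ?thesis using assms by (simp add: coeff_higher_pderiv coeff_eq_0)
  qed
qed

lemma poly_higher_pderiv_Rolle:
  fixes p :: "real poly" and x :: "nat \<Rightarrow> real"
  assumes "\<And>i. i < k \<Longrightarrow> x i < x (Suc i)" and "\<And>i. i \<le> k \<Longrightarrow> poly p (x i) = 0"
  shows "\<exists>\<xi>\<in>{x 0..x k}. poly ((pderiv ^^ k) p) \<xi> = 0"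
  using assms
proof (induction k arbitrary: p x)
  case 0
  then show ?case by auto
next
  case (Suc k)
  have "\<exists>y. x i < y \<and> y < x (Suc i) \<and> poly (pderiv p) y = 0" if "i \<le> k" for i
    using poly_MVT[of "x i" "x (Suc i)" p] Suc.prems that by force
  then obtain y
    where y: "\<And>i. i \<le> k \<Longrightarrow> x i < y i \<and> y i < x (Suc i) \<and> poly (pderiv p) (y i) = 0"
    by metis
  have "y i < y (Suc i)" if "i < k" for i
    using y[of i] y[of "Suc i"] that by force
  then have "\<exists>\<xi>\<in>{y 0..y k}. poly ((pderiv ^^ k) (pderiv p)) \<xi> = 0"
    using y by (intro Suc.IH) auto
  moreover have "{y 0..y k} \<subseteq> {x 0..x (Suc k)}"
    using y[of 0] y[of k] by auto
  ultimately show ?case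
    by (auto simp del: funpow.simps simp: funpow_Suc_right)
qed

definition divided_difference :: "(nat \<Rightarrow> 'a::field) \<Rightarrow> (nat \<Rightarrow> 'a) \<Rightarrow> nat \<Rightarrow> 'a" where
  "divided_difference x v k = (\<Sum>i\<le>k. v i / (\<Prod>j\<in>{..k} - {i}. x i - x j))"

definition lagrange_interpolant :: "(nat \<Rightarrow> 'a::field) \<Rightarrow> (nat \<Rightarrow> 'a) \<Rightarrow> nat \<Rightarrow> 'a poly" where
  "lagrange_interpolant x v k =
     (\<Sum>i\<le>k. smult (v i / (\<Prod>j\<in>{..k} - {i}. x i - x j)) (\<Prod>j\<in>{..k} - {i}. [:- x j, 1:]))"

lemma degree_lagrange_interpolant: "degree (lagrange_interpolant x v k) \<le> k"
  unfolding lagrange_interpolant_def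
proof (intro degree_sum_le)
  fix i assume "i \<in> {..k}"
  have "degree (\<Prod>j\<in>{..k} - {i}. [:- x j, 1:]) = card ({..k} - {i})"
    by (simp add: degree_prod_sum_eq)
  then show "degree (smult (v i / (\<Prod>j\<in>{..k} - {i}. x i - x j)) (\<Prod>j\<in>{..k} - {i}. [:- x j, 1:])) \<le> k"
    using \<open>i \<in> {..k}\<close> by (simp add: le_trans[OF degree_smult_le])
qed simp

lemma coeff_lagrange_interpolant:
  "coeff (lagrange_interpolant x v k) k = divided_difference x v k"
proof -
  have "coeff (\<Prod>j\<in>{..k} - {i}. [:- x j, 1:]) k = 1" if "i \<le> k" for i
  proof -
    have "degree (\<Prod>j\<in>{..k} - {i}. [:- x j, 1:]) = k"
      using that by (simp add: degree_prod_sum_eq)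
    then have "coeff (\<Prod>j\<in>{..k} - {i}. [:- x j, 1:]) k = lead_coeff (\<Prod>j\<in>{..k} - {i}. [:- x j, 1:])"
      by simp
    also have "\<dots> = 1"
      by (simp add: lead_coeff_prod)
    finally show ?thesis .
  qed
  then show ?thesis
    by (simp add: lagrange_interpolant_def divided_difference_def coeff_sum)
qed

lemma poly_lagrange_interpolant:
  assumes "inj_on x {..k}" and "m \<le> k"
  shows "poly (lagrange_interpolant x v k) (x m) = v m"
proof -
  define g where "g i = v i * (\<Prod>j\<in>{..k} - {i}. x m - x j) / (\<Prod>j\<in>{..k} - {i}. x i - x j)" for i
  have "poly (lagrange_interpolant x v k) (x m) = (\<Sum>i\<le>k. g i)"
    by (simp add: lagrange_interpolant_def poly_sum poly_prod g_def)
  also have "\<dots> = g m + (\<Sum>i\<in>{..k} - {m}. g i)"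
    using assms(2) by (simp add: sum.remove)
  also have "(\<Sum>i\<in>{..k} - {m}. g i) = 0"
    using assms(2) by (intro sum.neutral) (auto simp: g_def intro!: prod_zero bexI[of _ m])
  also have "(\<Prod>j\<in>{..k} - {m}. x m - x j) \<noteq> 0"
    using inj_on_contraD[OF assms(1)] assms(2) by (auto simp: prod_zero_iff)
  then have "g m = v m"
    by (simp add: g_def)
  finally show ?thesis by simp
qed

lemma divided_difference_mean_value:
  fixes p :: "real poly"
  assumes "\<And>i. i < k \<Longrightarrow> x i < x (Suc i)"
  shows "\<exists>\<xi>\<in>{x 0..x k}.
           poly ((pderiv ^^ k) p) \<xi> = fact k * divided_difference x (\<lambda>i. poly p (x i)) k"
proof -
  define q where "q = lagrange_interpolant x (\<lambda>i. poly p (x i)) k"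
  have "inj_on x {..k}"
    using strict_mono_on_imp_inj_on[OF strict_mono_on_atMostI] assms by blast
  then have "\<exists>\<xi>\<in>{x 0..x k}. poly ((pderiv ^^ k) (p - q)) \<xi> = 0"
    by (intro poly_higher_pderiv_Rolle assms) (simp_all add: q_def poly_lagrange_interpolant)
  moreover have "(pderiv ^^ k) q = [:fact k * divided_difference x (\<lambda>i. poly p (x i)) k:]"
    by (simp add: q_def higher_pderiv_degree_le degree_lagrange_interpolant coeff_lagrange_interpolant)
  ultimately show ?thesis
    by (simp add: higher_pderiv_diff)
qed

lemma divided_difference_lower_bound:
  fixes p :: "real poly"
  assumes "\<And>i. i < k \<Longrightarrow> x i < x (Suc i)"
    and "\<And>\<xi>. \<xi> \<in> {x 0..x k} \<Longrightarrow> c \<le> poly ((pderiv ^^ k) p) \<xi>"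
  shows "c \<le> fact k * divided_difference x (\<lambda>i. poly p (x i)) k"
proof -
  obtain \<xi> where "\<xi> \<in> {x 0..x k}"
    and "poly ((pderiv ^^ k) p) \<xi> = fact k * divided_difference x (\<lambda>i. poly p (x i)) k"
    using divided_difference_mean_value[of k x p] assms(1) by blast
  with assms(2) show ?thesis by metis
qed

lemma abs_poly_le_SUP:
  fixes q :: "real poly"
  assumes "x \<in> {a..b}"
  shows "\<bar>poly q x\<bar> \<le> (SUP y\<in>{a..b}. \<bar>poly q y\<bar>)"
proof (rule cSUP_upper[OF assms])
  have "compact ((\<lambda>y. \<bar>poly q y\<bar>) ` {a..b})"
    by (intro compact_continuous_image continuous_intros) simp
  then show "bdd_above ((\<lambda>y. \<bar>poly q y\<bar>) ` {a..b})"
    by (intro bounded_imp_bdd_above compact_imp_bounded)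
qed

lemma poly_sym_poly:
  assumes "k \<le> n"
  shows "poly (sym_poly n f) (real k) = weight_fraction n f k"
proof -
  define q where "q = lagrange_interpolant real (weight_fraction n f) n"
  have "inj_on real {..n}"
    by (simp add: inj_on_def)
  then have q_nodes: "\<forall>k\<le>n. poly q (real k) = weight_fraction n f k"
    by (simp add: q_def poly_lagrange_interpolant)
  have q_degree: "degree q \<le> n"
    by (simp add: q_def degree_lagrange_interpolant)
  have uniq: "p = q" if p_degree: "degree p \<le> n" and p_nodes: "\<forall>k\<le>n. poly p (real k) = weight_fraction n f k"
    for p
  proof (rule poly_eqI_degree[of "real ` {..n}"])
    show "poly p x = poly q x" if "x \<in> real ` {..n}" for x
      using that p_nodes q_nodes by auto
    have "card (real ` {..n}) = Suc n"
      by (simp add: card_image)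
    then show "degree p < card (real ` {..n})" "degree q < card (real ` {..n})"
      using p_degree q_degree by simp_all
  qed
  have "sym_poly n f = q"
    unfolding sym_poly_def
  proof (rule the_equality)
    show "degree q \<le> n \<and> (\<forall>k\<le>n. poly q (real k) = weight_fraction n f k)"
      using q_degree q_nodes by blast
  qed (use uniq in blast)
  with q_nodes assms show ?thesis
    by simp
qed

lemma weight_fraction_bounds:
  assumes "k \<le> n"
  shows "0 \<le> weight_fraction n f k" "weight_fraction n f k \<le> 1"
proof -
  have "card {S. S \<subseteq> {0..<n} \<and> card S = k \<and> f S} \<le> card {S. S \<subseteq> {0..<n} \<and> card S = k}"
    by (intro card_mono) auto
  also have "\<dots> = n choose k"
    using n_subsets[of "{0..<n}" k] by simp
  finally show "0 \<le> weight_fraction n f k" "weight_fraction n f k \<le> 1"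
    using assms by (simp_all add: weight_fraction_def divide_le_eq_1)
qed

lemma weight_fraction_0:
  assumes "fully_sensitive_at_0 n f"
  shows "weight_fraction n f 0 = 0"
proof -
  have "S = {}" if "S \<subseteq> {0..<n}" and "card S = 0" for S :: "nat set"
    using that finite_subset[OF that(1)] by simp
  then have "{S. S \<subseteq> {0..<n} \<and> card S = 0 \<and> f S} = {}"
    using assms by (auto simp: fully_sensitive_at_0_def)
  then show ?thesis
    by (simp add: weight_fraction_def)
qed

lemma weight_fraction_1:
  assumes "fully_sensitive_at_0 n f" and "1 \<le> n"
  shows "weight_fraction n f 1 = 1"
proof -
  have "{S. S \<subseteq> {0..<n} \<and> card S = 1 \<and> f S} = {S. S \<subseteq> {0..<n} \<and> card S = 1}"
    using assms(1) by (auto simp: card_1_singleton_iff fully_sensitive_at_0_def)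
  moreover have "card {S. S \<subseteq> {0..<n} \<and> card S = 1} = n"
    using n_subsets[of "{0..<n}" 1] by simp
  ultimately show ?thesis
    using assms(2) by (simp add: weight_fraction_def)
qed

lemma higher_pderiv_p_tilde: "(pderiv ^^ 4) p_tilde = [:-1/6:]"
  by (simp add: p_tilde_def eval_nat_numeral pderiv_pCons)

lemma extremal_values_at_nodes:
  fixes p :: "real poly"
  assumes "\<And>x. x \<in> {0..8} \<Longrightarrow> -1/6 \<le> poly ((pderiv ^^ 4) p) x"
    and "poly p 0 = 0" "poly p 1 = 1" "poly p 2 \<le> 1" "0 \<le> poly p 5" "poly p 8 \<le> 1"
  shows "poly p 2 = 1" "poly p 5 = 0" "poly p 8 = 1"
proof -
  have "-1/6 \<le> fact 4 * divided_difference ((!) [0, 1, 2, 5, 8]) (\<lambda>i. poly p ([0, 1, 2, 5, 8] ! i)) 4"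
  proof (rule divided_difference_lower_bound)
    show "[0, 1, 2, 5, 8::real] ! i < [0, 1, 2, 5, 8] ! Suc i" if "i < 4" for i
      using that by (auto simp: less_Suc_eq numeral_eq_Suc)
  qed (rule assms(1), simp add: numeral_eq_Suc)
  also have "\<dots> = 24 * (poly p 0 / 80 - poly p 1 / 28 + poly p 2 / 36 - poly p 5 / 180 + poly p 8 / 1008)"
    by (simp add: divided_difference_def numeral_eq_Suc atMost_Suc insert_Diff_if)
  finally show "poly p 2 = 1" "poly p 5 = 0" "poly p 8 = 1"
    using assms(2-) by auto
qed

lemma eq_p_tilde_if_higher_pderiv_ge:
  fixes p :: "real poly"
  assumes deriv: "\<And>x. x \<in> {0..8} \<Longrightarrow> -1/6 \<le> poly ((pderiv ^^ 4) p) x"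
    and "poly p 0 = 0" "poly p 1 = 1" "poly p 2 \<le> 1" "0 \<le> poly p 5" "poly p 8 \<le> 1"
  shows "p = p_tilde"
proof -
  define r where "r = p - p_tilde"
  have r_deriv: "0 \<le> poly ((pderiv ^^ 4) r) x" if "x \<in> {0..8}" for x
    using deriv[OF that] by (simp add: r_def higher_pderiv_diff higher_pderiv_p_tilde)
  have r_nodes: "poly r 0 = 0" "poly r 1 = 0" "poly r 2 = 0" "poly r 5 = 0" "poly r 8 = 0"
    using assms(2-) extremal_values_at_nodes[OF assms] by (simp_all add: r_def p_tilde_def)
  have "poly r t = 0" if t: "5 < t" "t < 8" for t
  proof -
    have "0 \<le> fact 4 * divided_difference ((!) [0, 1, 2, 5, t]) (\<lambda>i. poly r ([0, 1, 2, 5, t] ! i)) 4"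
    proof (rule divided_difference_lower_bound)
      show "[0, 1, 2, 5, t] ! i < [0, 1, 2, 5, t] ! Suc i" if "i < 4" for i
        using that t by (auto simp: less_Suc_eq numeral_eq_Suc)
    qed (use t in \<open>simp add: r_deriv\<close>)
    then have "0 \<le> 24 * poly r t / ((t - 5) * ((t - 2) * ((t - 1) * t)))"
      by (simp add: divided_difference_def numeral_eq_Suc atMost_Suc insert_Diff_if r_nodes)
    moreover have "0 < (t - 5) * ((t - 2) * ((t - 1) * t))"
      using t by (intro mult_pos_pos) auto
    ultimately have "0 \<le> poly r t"
      by (simp add: zero_le_divide_iff)
    have "0 \<le> fact 4 * divided_difference ((!) [0, 1, 2, t, 8]) (\<lambda>i. poly r ([0, 1, 2, t, 8] ! i)) 4"
    proof (rule divided_difference_lower_bound)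
      show "[0, 1, 2, t, 8] ! i < [0, 1, 2, t, 8] ! Suc i" if "i < 4" for i
        using that t by (auto simp: less_Suc_eq numeral_eq_Suc)
    qed (simp add: r_deriv)
    then have "0 \<le> 24 * poly r t / ((t - 8) * ((t - 2) * ((t - 1) * t)))"
      by (simp add: divided_difference_def numeral_eq_Suc atMost_Suc insert_Diff_if r_nodes)
    moreover have "(t - 8) * ((t - 2) * ((t - 1) * t)) < 0"
      using t by (intro mult_neg_pos mult_pos_pos) auto
    ultimately have "poly r t \<le> 0"
      by (simp add: zero_le_divide_iff)
    with \<open>0 \<le> poly r t\<close> show ?thesis
      by simp
  qed
  then have roots: "{5<..<8} \<subseteq> {x. poly r x = 0}"
    by auto
  have "r = 0"
  proof (rule ccontr)
    assume "r \<noteq> 0"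
    with roots have "finite {5<..<8::real}"
      by (rule finite_subset[OF _ poly_roots_finite])
    then show False
      using infinite_Ioo[of "5::real" 8] by simp
  qed
  then show ?thesis
    by (simp add: r_def)
qed

theorem theorem10:
  fixes n :: nat and f :: "nat set \<Rightarrow> bool"
  assumes "n \<ge> 8" and "fully_sensitive_at_0 n f"
  shows "(SUP x\<in>{0..real n}. \<bar>poly ((pderiv ^^ 4) (sym_poly n f)) x\<bar>) \<ge> 1/6
         \<and> ((SUP x\<in>{0..real n}. \<bar>poly ((pderiv ^^ 4) (sym_poly n f)) x\<bar>) = 1/6
              \<longrightarrow> sym_poly n f = p_tilde)"
proof -
  define p where "p = sym_poly n f"
  define M where "M = (SUP x\<in>{0..real n}. \<bar>poly ((pderiv ^^ 4) p) x\<bar>)"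
  have p_nodes: "poly p (real k) = weight_fraction n f k" if "k \<le> n" for k
    using that by (simp add: p_def poly_sym_poly)
  have node_values: "poly p 0 = 0" "poly p 1 = 1" "poly p 2 \<le> 1" "0 \<le> poly p 5" "poly p 8 \<le> 1"
    using p_nodes[of 0] p_nodes[of 1] p_nodes[of 2] p_nodes[of 5] p_nodes[of 8] assms(1)
      weight_fraction_0[OF assms(2)] weight_fraction_1[OF assms(2)]
      weight_fraction_bounds[of 2 n f] weight_fraction_bounds[of 5 n f] weight_fraction_bounds[of 8 n f]
    by simp_all
  have extremal: "p = p_tilde" if "M \<le> 1/6"
  proof (rule eq_p_tilde_if_higher_pderiv_ge[OF _ node_values])
    fix x :: real
    assume "x \<in> {0..8}"
    moreover have "(8::real) \<le> real n"
      using assms(1) by simp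
    ultimately have "x \<in> {0..real n}"
      by simp
    then have "\<bar>poly ((pderiv ^^ 4) p) x\<bar> \<le> M"
      unfolding M_def by (rule abs_poly_le_SUP)
    with that show "-1/6 \<le> poly ((pderiv ^^ 4) p) x"
      by linarith
  qed
  have "1/6 \<le> M"
  proof (rule ccontr)
    assume "\<not> 1/6 \<le> M"
    then have "p = p_tilde"
      by (intro extremal) simp
    moreover have "\<bar>poly ((pderiv ^^ 4) p) 0\<bar> \<le> M"
      unfolding M_def by (intro abs_poly_le_SUP) simp
    ultimately show False
      using \<open>\<not> 1/6 \<le> M\<close> by (simp add: higher_pderiv_p_tilde)
  qed
  with extremal show ?thesis
    unfolding M_def p_def by simp
qed

end
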